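(* The composite map $$(\pi_0^{\mathrm{N}}\mathcal{F}_2)(k)\xrightarrow{\pi_0^{\mathrm{N}}\mathrm{B\acute{e}z}_2}(\pi_0^{\mathrm{N}}\mathcal{S}_2)(k)\xrightarrow{\overline{q}_2\times\det}\mathrm{MW}^{\mathrm{s}}_2(k)\times_{k^\times/k^{\times2}}k^\times$$ is injective.
   Context: Let $k$ be a field. $\mathcal{F}_2(R)$ is the set of pairs $(A,B)$ of polynomials in $R[X]$, $A$ monic of degree 2, $\deg B<2$, $\mathrm{res}_{2,2}(A,B)\in R^\times$; $\mathcal{S}_2(R)$ the set of symmetric $2\times2$ matrices over $R$ with invertible determinant. For a functor $\mathcal{G}$ on $k$-algebras, $(\pi_0^{\mathrm{N}}\mathcal{G})(k)$ is the coequalizer of $\mathcal{G}(k[T])\rightrightarrows\mathcal{G}(k)$ (evaluation at $T=0,1$). $\mathrm{B\acute{e}z}_2(A,B)=[c_{p,q}]$ where $\frac{A(X)B(Y)-A(Y)B(X)}{X-Y}=\sum c_{p,q}X^{p-1}Y^{q-1}$. $\mathrm{MW}^{\mathrm{s}}_2(k)$ is the set of stable isomorphism classes of rank-2 non-degenerate symmetric bilinear forms over $k$; $\overline{q}_2$ sends the homotopy class of a matrix to the stable class of its form (well defined). The fibre product is over the discriminant (determinant mod squares) and $k^\times\to k^\times/k^{\times2}$. *)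

theory Defs
  imports "Subresultants.Resultant_Prelim"
begin

definition res22 :: "'r::comm_ring_1 poly \<Rightarrow> 'r poly \<Rightarrow> 'r" where
  "res22 A B = det (sylvester_mat_sub 2 2 A B)"

definition F2 :: "'r::comm_ring_1 itself \<Rightarrow> ('r poly \<times> 'r poly) set" where
  "F2 _ = {(A, B). degree A = 2 \<and> coeff A 2 = 1 \<and> degree B < 2 \<and> res22 A B dvd 1}"

text \<open>Evaluation k[T][X] -> k[X] of the coefficients at T = t.\<close>
definition eval_T :: "'a::comm_ring_1 \<Rightarrow> 'a poly poly \<Rightarrow> 'a poly" where
  "eval_T t P = map_poly (\<lambda>c. poly c t) P"

definition naive_htpy :: "('a::comm_ring_1 poly \<times> 'a poly) \<Rightarrow> ('a poly \<times> 'a poly) \<Rightarrow> bool" where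
  "naive_htpy f g \<longleftrightarrow> (\<exists>H G. (H, G) \<in> F2 TYPE('a poly) \<and>
      f = (eval_T 0 H, eval_T 0 G) \<and> g = (eval_T 1 H, eval_T 1 G))"

text \<open>Equality in the coequalizer pi_0^N F_2(k): equivalence relation generated by naive_htpy.\<close>
definition naive_htpy_equiv :: "('a::comm_ring_1 poly \<times> 'a poly) \<Rightarrow> ('a poly \<times> 'a poly) \<Rightarrow> bool" where
  "naive_htpy_equiv = (\<lambda>f g. naive_htpy f g \<or> naive_htpy g f)\<^sup>*\<^sup>*"

text \<open>Bivariate polynomials: outer variable Y, inner variable X.\<close>
definition polyX :: "'a::comm_ring_1 poly \<Rightarrow> 'a poly poly" where
  "polyX A = [:A:]"
definition polyY :: "'a::comm_ring_1 poly \<Rightarrow> 'a poly poly" where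
  "polyY A = map_poly (\<lambda>c. [:c:]) A"

text \<open>Bezout matrix: c_{p,q} is the coefficient of X^(p-1) Y^(q-1) in
  (A(X)B(Y) - A(Y)B(X)) / (X - Y); here indices are 0-based.\<close>
definition bez2 :: "'a::idom poly \<Rightarrow> 'a poly \<Rightarrow> 'a mat" where
  "bez2 A B = (let Q = (THE Q. polyX A * polyY B - polyY A * polyX B
                               = [:[:0, 1:], -1:] * Q)
               in mat 2 2 (\<lambda>(p, q). coeff (coeff Q q) p))"

definition congruent_mat :: "nat \<Rightarrow> 'a::comm_ring_1 mat \<Rightarrow> 'a mat \<Rightarrow> bool" where
  "congruent_mat n M N \<longleftrightarrow> (\<exists>P \<in> carrier_mat n n. det P dvd 1 \<and>
      transpose_mat P * M * P = N)"

definition nondeg_sym :: "nat \<Rightarrow> 'a::comm_ring_1 mat \<Rightarrow> bool" where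
  "nondeg_sym n M \<longleftrightarrow> M \<in> carrier_mat n n \<and> transpose_mat M = M \<and> det M dvd 1"

definition stably_iso :: "nat \<Rightarrow> 'a::comm_ring_1 mat \<Rightarrow> 'a mat \<Rightarrow> bool" where
  "stably_iso n M N \<longleftrightarrow> (\<exists>m C. nondeg_sym m C \<and>
      congruent_mat (n + m) (four_block_mat M (0\<^sub>m n m) (0\<^sub>m m n) C)
                            (four_block_mat N (0\<^sub>m n m) (0\<^sub>m m n) C))"

end

theory Submission
  imports Defs
begin

text \<open>
  A pair \<open>(A, B)\<close> in \<open>F\<^sub>2(k)\<close> can be deformed, with \<open>B\<close> fixed, along a straight line to a pair
  \<open>bez_pair p r q\<close> that depends only on its Bezout matrix \<open>[p r; r q]\<close>. Conversely, a polynomial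
  family of binary forms of constant determinant lifts to a naive homotopy of such pairs; in particular
  every substitution of variables by a shear does. Shears generate \<open>SL\<^sub>2(k)\<close>, so up to homotopy
  a form of determinant \<open>d\<close> representing \<open>c \<noteq> 0\<close> becomes \<open>[c 0; 0 d/c]\<close>, and an isotropic one becomes
  \<open>[0 e; e 0]\<close>. Two forms of equal determinant are therefore homotopic as soon as they represent
  a common value. Stable isomorphism provides such a value: an isometry
  \<open>N \<oplus> C \<cong> M \<oplus> C\<close> has, by a dimension count, a vector \<open>(y, c) \<mapsto> (x, c)\<close> with \<open>(x, y) \<noteq> 0\<close>,
  and then \<open>N(y) = M(x)\<close>.
\<close>

section \<open>Bezout matrices of pairs in \<open>F\<^sub>2\<close>\<close>

lemma det_mat_Suc:
  fixes f :: "nat \<times> nat \<Rightarrow> 'a::comm_ring_1"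
  shows "det (mat (Suc n) (Suc n) f) = (\<Sum>i<Suc n. f (i, 0) * ((-1)^i *
           det (mat n n (\<lambda>(i', j'). f (if i' < i then i' else Suc i', Suc j')))))"
proof -
  have "det (mat (Suc n) (Suc n) f)
      = (\<Sum>i<Suc n. mat (Suc n) (Suc n) f $$ (i, 0) * cofactor (mat (Suc n) (Suc n) f) i 0)"
    by (rule laplace_expansion_column) auto
  also have "\<dots> = (\<Sum>i<Suc n. f (i, 0) * ((-1)^i *
                   det (mat n n (\<lambda>(i', j'). f (if i' < i then i' else Suc i', Suc j')))))"
  proof (rule sum.cong[OF refl])
    fix i assume i: "i \<in> {..<Suc n}"
    have "mat_delete (mat (Suc n) (Suc n) f) i 0
        = mat n n (\<lambda>(i', j'). f (if i' < i then i' else Suc i', Suc j'))"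
      unfolding mat_delete_def by (rule eq_matI) (use i in auto)
    then show "mat (Suc n) (Suc n) f $$ (i, 0) * cofactor (mat (Suc n) (Suc n) f) i 0
             = f (i, 0) * ((-1)^i * det (mat n n (\<lambda>(i', j'). f (if i' < i then i' else Suc i', Suc j'))))"
      using i by (simp add: cofactor_def)
  qed
  finally show ?thesis .
qed

lemma det_mat_0: "det (mat 0 0 f) = 1"
  by (simp add: det_def)

lemma det_mat_2:
  fixes f :: "nat \<times> nat \<Rightarrow> 'a::comm_ring_1"
  shows "det (mat 2 2 f) = f (0, 0) * f (1, 1) - f (1, 0) * f (0, 1)"
  by (simp add: numeral_2_eq_2 det_mat_Suc det_mat_0 lessThan_Suc algebra_simps)

lemma res22_pCons:
  fixes a0 a1 b0 b1 :: "'a::comm_ring_1"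
  shows "res22 [:a0, a1, 1:] [:b0, b1:] = b0^2 - b1 * (a1*b0 - a0*b1)"
  unfolding res22_def sylvester_mat_sub_def
  by (simp add: numeral_eq_Suc det_mat_Suc det_mat_0 lessThan_Suc power2_eq_square algebra_simps)

lemma pCons_pair_in_F2_iff:
  fixes a0 a1 b0 b1 :: "'r::comm_ring_1"
  shows "([:a0, a1, 1:], [:b0, b1:]) \<in> F2 TYPE('r) \<longleftrightarrow> res22 [:a0, a1, 1:] [:b0, b1:] dvd 1"
  unfolding F2_def by (auto simp: numeral_2_eq_2)

lemma F2_field_cases:
  fixes A B :: "'a::field poly"
  assumes "(A, B) \<in> F2 TYPE('a)"
  obtains a0 a1 b0 b1 where "A = [:a0, a1, 1:]" "B = [:b0, b1:]" "res22 A B \<noteq> 0"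
proof
  have "degree A = 2" "coeff A 2 = 1" "degree B < 2" "res22 A B dvd 1"
    using assms unfolding F2_def by auto
  then show "A = [:coeff A 0, coeff A 1, 1:]" "B = [:coeff B 0, coeff B 1:]" "res22 A B \<noteq> 0"
    by (auto intro!: poly_eqI simp: coeff_pCons coeff_eq_0 numeral_2_eq_2 split: nat.split)
qed

definition sym_mat2 :: "'a::zero \<Rightarrow> 'a \<Rightarrow> 'a \<Rightarrow> 'a mat" where
  "sym_mat2 p r q = mat 2 2 (\<lambda>(i, j). if i = 0 \<and> j = 0 then p else if i = 1 \<and> j = 1 then q else r)"

definition binary_qf :: "'a::comm_ring_1 \<Rightarrow> 'a \<Rightarrow> 'a \<Rightarrow> 'a \<Rightarrow> 'a \<Rightarrow> 'a" where
  "binary_qf p r q x y = p*x^2 + 2*r*x*y + q*y^2"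

lemma sym_mat2_carrier: "sym_mat2 p r q \<in> carrier_mat 2 2"
  by (simp add: sym_mat2_def)

lemma det_sym_mat2: "det (sym_mat2 p r q) = p*q - (r::'a::comm_ring_1)^2"
  unfolding sym_mat2_def det_mat_2 by (simp add: power2_eq_square)

lemma sym_mat2_quadratic_form:
  fixes p r q :: "'a::comm_ring_1"
  assumes "x \<in> carrier_vec 2"
  shows "x \<bullet> (sym_mat2 p r q *\<^sub>v x) = binary_qf p r q (x $ 0) (x $ 1)"
  using assms unfolding sym_mat2_def binary_qf_def
  by (simp add: scalar_prod_def mult_mat_vec_def numeral_2_eq_2 power2_eq_square algebra_simps)

lemma bez2_pCons:
  fixes a0 a1 b0 b1 :: "'a::idom"
  shows "bez2 [:a0, a1, 1:] [:b0, b1:] = sym_mat2 (a1*b0 - a0*b1) b0 b1"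
proof -
  define Q :: "'a poly poly" where "Q = [: [:a1*b0 - a0*b1, b0:], [:b0, b1:] :]"
  let ?D = "polyX [:a0, a1, 1:] * polyY [:b0, b1:] - polyY [:a0, a1, 1:] * polyX [:b0, b1:]"
  have div: "?D = [:[:0, 1:], -1:] * Q"
    unfolding Q_def polyX_def polyY_def
    by (simp add: map_poly_simps algebra_simps smult_add_right one_pCons)
  have the_Q: "(THE Q'. ?D = [:[:0, 1:], -1:] * Q') = Q"
  proof (rule the_equality)
    fix Q' assume "?D = [:[:0, 1:], -1:] * Q'"
    then have "[:[:0, 1:], -1:] * Q' = [:[:0, 1:], -1:] * Q"
      using div by simp
    then show "Q' = Q"
      by (subst (asm) mult_left_cancel) simp_all
  qed (fact div)
  show ?thesis
    unfolding bez2_def Let_def the_Q unfolding sym_mat2_def Q_def by (rule eq_matI) (auto simp: less_2_cases_iff)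
qed


section \<open>Naive homotopies\<close>

lemma naive_htpy_equiv_refl [simp]: "naive_htpy_equiv f f"
  unfolding naive_htpy_equiv_def by simp

lemma naive_htpy_equiv_sym: "naive_htpy_equiv f g \<Longrightarrow> naive_htpy_equiv g f"
  unfolding naive_htpy_equiv_def by (metis (no_types, lifting) symp_rtranclp sympD sympI)

lemma naive_htpy_equiv_trans [trans]:
  "naive_htpy_equiv f g \<Longrightarrow> naive_htpy_equiv g h \<Longrightarrow> naive_htpy_equiv f h"
  unfolding naive_htpy_equiv_def by (rule rtranclp_trans)

lemma eval_T_pCons [simp]: "eval_T t (pCons a P) = pCons (poly a t) (eval_T t P)"
  unfolding eval_T_def by (cases "a = 0 \<and> P = 0") simp_all

lemma eval_T_0 [simp]: "eval_T t 0 = 0"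
  unfolding eval_T_def by simp

lemma F2_path_htpy_equiv:
  assumes "(H, G) \<in> F2 TYPE('a::comm_ring_1 poly)"
  shows "naive_htpy_equiv (eval_T 0 H, eval_T 0 G) (eval_T 1 H, eval_T 1 G)"
  using assms unfolding naive_htpy_equiv_def naive_htpy_def by blast

lemma same_bezoutian_htpy_equiv:
  fixes a0 a1 a0' a1' b0 b1 :: "'a::field"
  assumes res: "res22 [:a0, a1, 1:] [:b0, b1:] \<noteq> 0"
    and bez: "a1'*b0 - a0'*b1 = a1*b0 - a0*b1"
  shows "naive_htpy_equiv ([:a0, a1, 1:], [:b0, b1:]) ([:a0', a1', 1:], [:b0, b1:])"
proof -
  define H where "H = [:[:a0, a0' - a0:], [:a1, a1' - a1:], 1:]"
  define G where "G = [:[:b0:], [:b1:]:]"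
  \<comment> \<open>along the straight line from A to A' the Bezoutian, hence the resultant, stays constant\<close>
  have "res22 H G = [:res22 [:a0, a1, 1:] [:b0, b1:]:]"
    unfolding H_def G_def res22_pCons using bez
    by (simp add: algebra_simps power2_eq_square)
  then have "(H, G) \<in> F2 TYPE('a poly)"
    unfolding H_def G_def pCons_pair_in_F2_iff using res by (simp add: is_unit_pCons_iff)
  from F2_path_htpy_equiv[OF this] show ?thesis
    unfolding H_def G_def by simp
qed

text \<open>For \<open>p q \<noteq> r\<^sup>2\<close>, the pair in \<open>F2\<close> with \<open>B = r + q X\<close> whose Bezout matrix is \<open>sym_mat2 p r q\<close>.\<close>
definition bez_pair :: "'a::field \<Rightarrow> 'a \<Rightarrow> 'a \<Rightarrow> 'a poly \<times> 'a poly" where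
  "bez_pair p r q = ([:-(p^2) / (p*q - r^2), -(p*r) / (p*q - r^2), 1:], [:r, q:])"

lemma htpy_equiv_bez_pair:
  fixes a0 a1 b0 b1 :: "'a::field"
  assumes res: "res22 [:a0, a1, 1:] [:b0, b1:] \<noteq> 0"
  shows "naive_htpy_equiv ([:a0, a1, 1:], [:b0, b1:]) (bez_pair (a1*b0 - a0*b1) b0 b1)"
proof -
  define p where "p = a1*b0 - a0*b1"
  have d: "p*b1 - b0^2 \<noteq> 0"
    using res unfolding res22_pCons p_def by (auto simp: algebra_simps)
  have "(-(p*b0) / (p*b1 - b0^2)) * b0 - (-(p^2) / (p*b1 - b0^2)) * b1
      = p * (p*b1 - b0^2) / (p*b1 - b0^2)"
    by (simp add: diff_divide_distrib[symmetric] algebra_simps power2_eq_square)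
  also have "\<dots> = p"
    using d by simp
  finally have "(-(p*b0) / (p*b1 - b0^2)) * b0 - (-(p^2) / (p*b1 - b0^2)) * b1 = p" .
  then show ?thesis
    unfolding bez_pair_def p_def[symmetric]
    by (intro same_bezoutian_htpy_equiv[OF res]) (simp add: p_def)
qed

lemma bez_pair_path_htpy_equiv:
  fixes P R Q :: "'a::field poly"
  assumes det: "P*Q - R^2 = [:d:]" and d: "d \<noteq> 0"
  shows "naive_htpy_equiv (bez_pair (poly P 0) (poly R 0) (poly Q 0))
                          (bez_pair (poly P 1) (poly R 1) (poly Q 1))"
proof -
  define H where "H = [:smult (-1/d) (P^2), smult (-1/d) (P*R), 1:]"
  define G where "G = [:R, Q:]"
  have "res22 H G = R^2 - smult (1/d) (P*Q * (P*Q - R^2))"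
    unfolding H_def G_def res22_pCons
    by (simp add: algebra_simps power2_eq_square smult_diff_right)
  also have "\<dots> = R^2 - P*Q"
    using d unfolding det by simp
  also have "\<dots> = [:-d:]"
    using det by (simp add: algebra_simps)
  finally have "(H, G) \<in> F2 TYPE('a poly)"
    unfolding H_def G_def pCons_pair_in_F2_iff using d by (simp add: is_unit_pCons_iff)
  moreover have "(eval_T t H, eval_T t G) = bez_pair (poly P t) (poly R t) (poly Q t)" for t
  proof -
    have "poly P t * poly Q t - (poly R t)^2 = d"
      using arg_cong[OF det, of "\<lambda>x. poly x t"] by (simp add: power2_eq_square)
    then show ?thesis
      unfolding H_def G_def bez_pair_def by (simp add: power2_eq_square)
  qed
  ultimately show ?thesis
    using F2_path_htpy_equiv by metis
qed


section \<open>Binary forms up to naive homotopy\<close>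

lemma bez_pair_shear_fst:
  fixes p r q s :: "'a::field"
  assumes "p*q - r^2 \<noteq> 0"
  shows "naive_htpy_equiv (bez_pair p r q) (bez_pair p (r + p*s) (q + 2*r*s + p*s^2))"
proof -
  have "[:p:] * [:q, 2*r*s, p*s^2:] - [:r, p*s:]^2 = [:p*q - r^2:]"
    by (simp add: power2_eq_square algebra_simps)
  from bez_pair_path_htpy_equiv[OF this assms] show ?thesis
    by (simp add: algebra_simps power2_eq_square)
qed

lemma bez_pair_shear_snd:
  fixes p r q s :: "'a::field"
  assumes "p*q - r^2 \<noteq> 0"
  shows "naive_htpy_equiv (bez_pair p r q) (bez_pair (p + 2*r*s + q*s^2) (r + q*s) q)"
proof -
  have "[:p, 2*r*s, q*s^2:] * [:q:] - [:r, q*s:]^2 = [:p*q - r^2:]"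
    by (simp add: power2_eq_square algebra_simps)
  from bez_pair_path_htpy_equiv[OF this assms] show ?thesis
    by (simp add: algebra_simps power2_eq_square)
qed

lemma bez_pair_kill_snd:
  fixes r q :: "'a::field"
  assumes "r \<noteq> 0"
  shows "naive_htpy_equiv (bez_pair 0 r q) (bez_pair 0 r 0)"
proof -
  have "0 * [:q, -q:] - [:r:]^2 = [:0*q - r^2:]"
    by (simp add: power2_eq_square)
  from bez_pair_path_htpy_equiv[OF this] assms show ?thesis
    by simp
qed

lemma binary_qf_shear_fst:
  "binary_qf p (r + p*s) (q + 2*r*s + p*s^2) x y = binary_qf p r q (x + s*y) y"
  unfolding binary_qf_def by (simp add: algebra_simps power2_eq_square)

lemma binary_qf_shear_snd:
  "binary_qf (p + 2*r*s + q*s^2) (r + q*s) q x y = binary_qf p r q x (s*x + y)"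
  unfolding binary_qf_def by (simp add: algebra_simps power2_eq_square)

lemma bez_pair_move_value:
  fixes p r q x y :: "'a::field"
  assumes d: "p*q - r^2 \<noteq> 0" and y: "y \<noteq> 0"
  obtains r' q' where "naive_htpy_equiv (bez_pair p r q) (bez_pair (binary_qf p r q x y) r' q')"
    and "binary_qf p r q x y * q' - r'^2 = p*q - r^2"
proof -
  \<comment> \<open>the two substitutions of variables move \<open>(1, 0)\<close> to \<open>(1, y)\<close> and then to \<open>(1 + s y, y) = (x, y)\<close>\<close>
  define s where "s = (x - 1) / y"
  define r1 where "r1 = r + p*s"
  define q1 where "q1 = q + 2*r*s + p*s^2"
  have d1: "p*q1 - r1^2 = p*q - r^2"
    unfolding r1_def q1_def by (simp add: algebra_simps power2_eq_square)
  have "p + 2*r1*y + q1*y^2 = binary_qf p r q (1 + s*y) y"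
    unfolding r1_def q1_def binary_qf_shear_fst[symmetric] by (simp add: binary_qf_def)
  also have "1 + s*y = x"
    using y unfolding s_def by simp
  finally have val: "p + 2*r1*y + q1*y^2 = binary_qf p r q x y" .
  have "naive_htpy_equiv (bez_pair p r q) (bez_pair p r1 q1)"
    unfolding r1_def q1_def by (rule bez_pair_shear_fst[OF d])
  also have "naive_htpy_equiv \<dots> (bez_pair (p + 2*r1*y + q1*y^2) (r1 + q1*y) q1)"
    by (rule bez_pair_shear_snd) (use d d1 in simp)
  finally have "naive_htpy_equiv (bez_pair p r q) (bez_pair (binary_qf p r q x y) (r1 + q1*y) q1)"
    unfolding val .
  moreover have "binary_qf p r q x y * q1 - (r1 + q1*y)^2 = p*q - r^2"
    using d1 unfolding val[symmetric] by (simp add: algebra_simps power2_eq_square)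
  ultimately show ?thesis
    by (rule that)
qed

lemma bez_pair_represented_value:
  fixes p r q x y :: "'a::field"
  assumes d: "p*q - r^2 \<noteq> 0" and xy: "x \<noteq> 0 \<or> y \<noteq> 0"
  obtains r' q' where "naive_htpy_equiv (bez_pair p r q) (bez_pair (binary_qf p r q x y) r' q')"
    and "binary_qf p r q x y * q' - r'^2 = p*q - r^2"
proof (cases "y = 0")
  case False
  then show ?thesis
    using bez_pair_move_value[OF d] that by blast
next
  case True
  \<comment> \<open>after the shear \<open>y \<mapsto> x + y\<close> the vector \<open>(x, 0)\<close> becomes \<open>(x, -x)\<close>\<close>
  define p1 where "p1 = p + 2*r + q"
  define r1 where "r1 = r + q"
  have d1: "p1*q - r1^2 = p*q - r^2"
    unfolding p1_def r1_def by (simp add: algebra_simps power2_eq_square)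
  have shear: "naive_htpy_equiv (bez_pair p r q) (bez_pair p1 r1 q)"
    using bez_pair_shear_snd[OF d, of 1] unfolding p1_def r1_def by simp
  have qf: "binary_qf p1 r1 q x (-x) = binary_qf p r q x y"
    using True unfolding p1_def r1_def binary_qf_def by (simp add: algebra_simps power2_eq_square)
  obtain r' q' where equiv: "naive_htpy_equiv (bez_pair p1 r1 q) (bez_pair (binary_qf p1 r1 q x (-x)) r' q')"
    and det: "binary_qf p1 r1 q x (-x) * q' - r'^2 = p1*q - r1^2"
    by (rule bez_pair_move_value[of p1 q r1 "-x" x]) (use d d1 xy True in auto)
  show ?thesis
  proof (rule that)
    show "naive_htpy_equiv (bez_pair p r q) (bez_pair (binary_qf p r q x y) r' q')"
      using naive_htpy_equiv_trans[OF shear equiv] unfolding qf .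
    show "binary_qf p r q x y * q' - r'^2 = p*q - r^2"
      using det d1 qf by simp
  qed
qed

lemma bez_pair_diagonalize:
  fixes p r q x y :: "'a::field"
  assumes d: "p*q - r^2 \<noteq> 0" and xy: "x \<noteq> 0 \<or> y \<noteq> 0" and c: "binary_qf p r q x y = c" "c \<noteq> 0"
  shows "naive_htpy_equiv (bez_pair p r q) (bez_pair c 0 ((p*q - r^2) / c))"
proof -
  obtain r' q' where to_c: "naive_htpy_equiv (bez_pair p r q) (bez_pair c r' q')"
    and d': "c*q' - r'^2 = p*q - r^2"
    using bez_pair_represented_value[OF d xy] c by metis
  note to_c
  also have "naive_htpy_equiv (bez_pair c r' q') (bez_pair c (r' + c*(-r'/c)) (q' + 2*r'*(-r'/c) + c*(-r'/c)^2))"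
    by (rule bez_pair_shear_fst) (use d d' in simp)
  also have "r' + c*(-r'/c) = 0"
    using c by simp
  also have "q' + 2*r'*(-r'/c) + c*(-r'/c)^2 = (p*q - r^2) / c"
    unfolding d'[symmetric] using c by (simp add: field_simps power2_eq_square)
  finally show ?thesis .
qed

lemma binary_qf_isotropic_imp_square:
  fixes p r q x y :: "'a::field"
  assumes xy: "x \<noteq> 0 \<or> y \<noteq> 0" and v: "binary_qf p r q x y = 0"
  shows "\<exists>e. e^2 = -(p*q - r^2)"
proof (cases "y = 0")
  case True
  then have "p = 0" using xy v by (simp add: binary_qf_def)
  then show ?thesis by (intro exI[of _ r]) simp
next
  case False
  have "(p*x + r*y)^2 = p * binary_qf p r q x y - (p*q - r^2) * y^2"
    unfolding binary_qf_def by (simp add: algebra_simps power2_eq_square)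
  then have "((p*x + r*y) / y)^2 = -(p*q - r^2)"
    using v False by (simp add: power_divide)
  then show ?thesis by blast
qed

lemma bez_pair_hyperbolic_sign:
  fixes e :: "'a::field"
  assumes e: "e \<noteq> 0"
  shows "naive_htpy_equiv (bez_pair 0 (-e) 0) (bez_pair 0 e 0)"
proof -
  \<comment> \<open>the rotation \<open>(x, y) \<mapsto> (-y, x)\<close> is a product of three shears\<close>
  have "naive_htpy_equiv (bez_pair 0 (-e) 0) (bez_pair 0 (-e) (2*e))"
    using bez_pair_shear_fst[of 0 0 "-e" "-1"] e by simp
  also have "naive_htpy_equiv \<dots> (bez_pair 0 e (2*e))"
    using bez_pair_shear_snd[of 0 "2*e" "-e" 1] e by (simp add: algebra_simps)
  also have "naive_htpy_equiv \<dots> (bez_pair 0 e 0)"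
    using bez_pair_shear_fst[of 0 "2*e" e "-1"] e by simp
  finally show ?thesis .
qed

lemma bez_pair_hyperbolic:
  fixes p r q e :: "'a::field"
  assumes d: "p*q - r^2 \<noteq> 0" and e: "e^2 = -(p*q - r^2)"
  shows "naive_htpy_equiv (bez_pair p r q) (bez_pair 0 e 0)"
proof -
  obtain r' q' where to_zero: "naive_htpy_equiv (bez_pair p r q) (bez_pair 0 r' q')"
    and d': "-(r'^2) = p*q - r^2"
  proof (cases "p = 0")
    case True
    then show ?thesis using that[of r q] by simp
  next
    case False
    have "binary_qf p r q ((e - r) / p) 1 = ((e - r)^2 + 2*r*(e - r) + p*q) / p"
      using False unfolding binary_qf_def by (simp add: field_simps power2_eq_square)
    also have "\<dots> = 0"
      using e by (simp add: algebra_simps power2_eq_square)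
    finally have isotropic: "binary_qf p r q ((e - r) / p) 1 = 0" .
    obtain r' q' where "naive_htpy_equiv (bez_pair p r q) (bez_pair (binary_qf p r q ((e - r) / p) 1) r' q')"
      and "binary_qf p r q ((e - r) / p) 1 * q' - r'^2 = p*q - r^2"
      by (rule bez_pair_represented_value[OF d, of "(e - r) / p" 1]) simp
    then show ?thesis
      using that[of r' q'] unfolding isotropic by simp
  qed
  have r': "r' \<noteq> 0" using d d' by auto
  note to_zero
  also have "naive_htpy_equiv (bez_pair 0 r' q') (bez_pair 0 r' 0)"
    by (rule bez_pair_kill_snd[OF r'])
  also have "naive_htpy_equiv (bez_pair 0 r' 0) (bez_pair 0 e 0)"
  proof -
    have "r'^2 = e^2"
      using e by (simp add: d'[symmetric])
    then have "r' = e \<or> r' = -e"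
      by (simp add: power2_eq_iff)
    then show ?thesis
      using bez_pair_hyperbolic_sign[of e] r' by auto
  qed
  finally show ?thesis .
qed


lemma bez_pair_htpy_equiv_common_value:
  fixes p r q p' r' q' x y x' y' :: "'a::field"
  assumes det: "p'*q' - r'^2 = p*q - r^2" and d: "p*q - r^2 \<noteq> 0"
    and xy: "x \<noteq> 0 \<or> y \<noteq> 0 \<or> x' \<noteq> 0 \<or> y' \<noteq> 0"
    and common: "binary_qf p r q x y = binary_qf p' r' q' x' y'"
  shows "naive_htpy_equiv (bez_pair p r q) (bez_pair p' r' q')"
proof (cases "\<exists>e. e^2 = -(p*q - r^2)")
  case True
  then obtain e where e: "e^2 = -(p*q - r^2)" ..
  have "naive_htpy_equiv (bez_pair p r q) (bez_pair 0 e 0)"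
    using bez_pair_hyperbolic[OF d e] .
  also have "naive_htpy_equiv (bez_pair 0 e 0) (bez_pair p' r' q')"
  proof (rule naive_htpy_equiv_sym, rule bez_pair_hyperbolic)
    show "p'*q' - r'^2 \<noteq> 0" "e^2 = -(p'*q' - r'^2)"
      using d e det by simp_all
  qed
  finally show ?thesis .
next
  case False
  define c where "c = binary_qf p r q x y"
  \<comment> \<open>both forms are anisotropic, so the common value is nonzero and represented nontrivially on both sides\<close>
  have c: "c \<noteq> 0"
  proof
    assume "c = 0"
    then have "binary_qf p r q x y = 0" "binary_qf p' r' q' x' y' = 0"
      using common unfolding c_def by simp_all
    then show False
      using False xy det binary_qf_isotropic_imp_square[of x y p r q]
        binary_qf_isotropic_imp_square[of x' y' p' r' q'] by auto
  qed
  have xy1: "x \<noteq> 0 \<or> y \<noteq> 0" and xy2: "x' \<noteq> 0 \<or> y' \<noteq> 0"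
    using c common unfolding c_def binary_qf_def by auto
  have "naive_htpy_equiv (bez_pair p r q) (bez_pair c 0 ((p*q - r^2) / c))"
    by (rule bez_pair_diagonalize[OF d xy1 c_def[symmetric] c])
  also have "naive_htpy_equiv (bez_pair c 0 ((p*q - r^2) / c)) (bez_pair p' r' q')"
    using bez_pair_diagonalize[of p' q' r' x' y' c] d det xy2 common c
    unfolding c_def by (simp add: naive_htpy_equiv_sym)
  finally show ?thesis .
qed



section \<open>Rank normal form and a range criterion\<close>

lemma zero_mat_mult_vec [simp]: "c \<in> carrier_vec m \<Longrightarrow> 0\<^sub>m n m *\<^sub>v c = (0\<^sub>v n :: 'a::comm_ring_1 vec)"
  by (rule eq_vecI) (auto simp: scalar_prod_def)

lemma mult_mat_vec_zero [simp]: "A \<in> carrier_mat nr n \<Longrightarrow> A *\<^sub>v 0\<^sub>v n = (0\<^sub>v nr :: 'a::comm_ring_1 vec)"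
  by (rule eq_vecI) (auto simp: scalar_prod_def)

definition one_block :: "'a::comm_ring_1 mat \<Rightarrow> 'a mat" where
  "one_block A = four_block_mat (1\<^sub>m 1) (0\<^sub>m 1 (dim_col A)) (0\<^sub>m (dim_row A) 1) A"

lemma one_block_carrier [simp]: "A \<in> carrier_mat n n \<Longrightarrow> one_block A \<in> carrier_mat (Suc n) (Suc n)"
  unfolding one_block_def by auto

lemma det_one_block: "A \<in> carrier_mat n n \<Longrightarrow> det (one_block (A :: 'a::idom mat)) = det A"
  unfolding one_block_def by (subst det_four_block_mat_upper_right_zero[of _ 1 _ n]) auto

lemma one_block_mult:
  assumes A: "A \<in> carrier_mat n n" and B: "B \<in> carrier_mat n n"
  shows "one_block A * one_block B = one_block (A * B)"
proof -
  have "one_block A * one_block B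
      = four_block_mat (1\<^sub>m 1 * 1\<^sub>m 1 + 0\<^sub>m 1 n * 0\<^sub>m n 1) (1\<^sub>m 1 * 0\<^sub>m 1 n + 0\<^sub>m 1 n * B)
          (0\<^sub>m n 1 * 1\<^sub>m 1 + A * 0\<^sub>m n 1) (0\<^sub>m n 1 * 0\<^sub>m 1 n + A * B)"
    unfolding one_block_def using A B by (simp add: mult_four_block_mat[of _ 1 1 _ n _ n _ _ 1 _ n])
  also have "\<dots> = one_block (A * B)"
    unfolding one_block_def using A B by (intro cong_four_block_mat) auto
  finally show ?thesis .
qed

lemma block_elimination:
  fixes A12 A21 A22 :: "'a::comm_ring_1 mat"
  assumes A12: "A12 \<in> carrier_mat 1 n" and A21: "A21 \<in> carrier_mat n 1" and A22: "A22 \<in> carrier_mat n n"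
  shows "four_block_mat (1\<^sub>m 1) (0\<^sub>m 1 n) (- A21) (1\<^sub>m n) * four_block_mat (1\<^sub>m 1) A12 A21 A22
         * four_block_mat (1\<^sub>m 1) (- A12) (0\<^sub>m n 1) (1\<^sub>m n)
       = one_block (A22 - A21 * A12)"
proof -
  have "four_block_mat (1\<^sub>m 1) (0\<^sub>m 1 n) (- A21) (1\<^sub>m n) * four_block_mat (1\<^sub>m 1) A12 A21 A22
     = four_block_mat (1\<^sub>m 1 * 1\<^sub>m 1 + 0\<^sub>m 1 n * A21) (1\<^sub>m 1 * A12 + 0\<^sub>m 1 n * A22)
         (- A21 * 1\<^sub>m 1 + 1\<^sub>m n * A21) (- A21 * A12 + 1\<^sub>m n * A22)"
    using assms by (intro mult_four_block_mat) auto
  also have "\<dots> = four_block_mat (1\<^sub>m 1) A12 (0\<^sub>m n 1) (A22 - A21 * A12)"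
    using assms by (intro cong_four_block_mat)
      (auto simp: comm_add_mat[of _ n n] add_uminus_minus_mat[of _ n n])
  also have "\<dots> * four_block_mat (1\<^sub>m 1) (- A12) (0\<^sub>m n 1) (1\<^sub>m n)
     = four_block_mat (1\<^sub>m 1 * 1\<^sub>m 1 + A12 * 0\<^sub>m n 1) (1\<^sub>m 1 * (- A12) + A12 * 1\<^sub>m n)
         (0\<^sub>m n 1 * 1\<^sub>m 1 + (A22 - A21 * A12) * 0\<^sub>m n 1) (0\<^sub>m n 1 * (- A12) + (A22 - A21 * A12) * 1\<^sub>m n)"
    using assms by (intro mult_four_block_mat) auto
  also have "\<dots> = one_block (A22 - A21 * A12)"
    unfolding one_block_def using assms by (intro cong_four_block_mat eq_matI) auto
  finally show ?thesis .
qed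

lemma transpose_swaprows_mat: "transpose_mat (swaprows_mat n k l) = (swaprows_mat n k l :: 'a::semiring_1 mat)"
  by (rule eq_matI) auto

lemma swaprows_mat_entry_swap:
  fixes A :: "'a::comm_ring_1 mat"
  assumes A: "A \<in> carrier_mat n n" and i: "i < n" and j: "j < n"
  shows "(swaprows_mat n 0 i * A * swaprows_mat n 0 j) $$ (0, 0) = A $$ (i, j)"
proof -
  have n: "0 < n" using i by simp
  define B where "B = swaprows_mat n 0 i * A"
  have B: "B \<in> carrier_mat n n" unfolding B_def using A by auto
  have "B * swaprows_mat n 0 j = transpose_mat (swaprows_mat n 0 j * transpose_mat B)"
    using transpose_mult[of "swaprows_mat n 0 j" n n "transpose_mat B" n] B
    by (simp add: transpose_swaprows_mat)
  also have "swaprows_mat n 0 j * transpose_mat B = swaprows 0 j (transpose_mat B)"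
    using swaprows_mat[of "transpose_mat B" n n 0 j] B n j by simp
  finally have "(B * swaprows_mat n 0 j) $$ (0, 0) = B $$ (0, j)"
    using B n j by simp
  also have "\<dots> = A $$ (i, j)"
    unfolding B_def swaprows_mat[OF A n i, symmetric] using A n i j by simp
  finally show ?thesis unfolding B_def .
qed


lemma det_swaprows_mat_nonzero:
  assumes "k < n" "l < n"
  shows "det (swaprows_mat n k l :: 'a::field mat) \<noteq> 0"
proof (cases "k = l")
  case True
  then have "swaprows_mat n k l = (1\<^sub>m n :: 'a mat)"
    by (intro eq_matI) auto
  then show ?thesis by simp
next
  case False
  then have "det (swaprows_mat n k l :: 'a mat) = - 1"
    using det_swaprows_mat[OF assms False] by blast
  then show ?thesis by simp
qed

lemma pivot_reduction:
  fixes A :: "'a::field mat"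
  assumes A: "A \<in> carrier_mat (Suc n) (Suc n)" and i: "i < Suc n" and j: "j < Suc n"
    and pivot: "A $$ (i, j) \<noteq> 0"
  obtains L R B where "L \<in> carrier_mat (Suc n) (Suc n)" "R \<in> carrier_mat (Suc n) (Suc n)"
    "det L \<noteq> 0" "det R \<noteq> 0" "B \<in> carrier_mat n n" "L * A * R = one_block B"
proof -
  define S1 :: "'a mat" where "S1 = swaprows_mat (Suc n) 0 i"
  define S2 :: "'a mat" where "S2 = swaprows_mat (Suc n) 0 j"
  define D :: "'a mat" where "D = multrow_mat (Suc n) 0 (1 / A $$ (i, j))"
  have S1: "S1 \<in> carrier_mat (Suc n) (Suc n)" "det S1 \<noteq> 0"
    unfolding S1_def using i by (auto simp: det_swaprows_mat_nonzero)
  have S2: "S2 \<in> carrier_mat (Suc n) (Suc n)" "det S2 \<noteq> 0"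
    unfolding S2_def using j by (auto simp: det_swaprows_mat_nonzero)
  have D: "D \<in> carrier_mat (Suc n) (Suc n)" "det D \<noteq> 0"
    unfolding D_def using pivot det_multrow_mat[of 0 "Suc n" "1 / A $$ (i, j)"] by auto
  define A1 where "A1 = S1 * A * S2"
  have A1: "A1 \<in> carrier_mat (Suc n) (Suc n)"
    unfolding A1_def using S1 S2 A by auto
  define A' where "A' = D * A1"
  have A': "A' \<in> carrier_mat (1 + n) (1 + n)"
    unfolding A'_def using D A1 by auto
  have "A1 $$ (0, 0) = A $$ (i, j)"
    unfolding A1_def S1_def S2_def by (rule swaprows_mat_entry_swap[OF A i j])
  then have "A' $$ (0, 0) = 1"
    unfolding A'_def D_def multrow_mat[OF A1, symmetric] using A1 pivot by simp
  obtain A11 A12 A21 A22 where split: "split_block A' 1 1 = (A11, A12, A21, A22)"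
    by (metis prod_cases4)
  have A12: "A12 \<in> carrier_mat 1 n" and A21: "A21 \<in> carrier_mat n 1" and A22: "A22 \<in> carrier_mat n n"
    and A'_blocks: "A' = four_block_mat A11 A12 A21 A22"
    using split_block[OF split, of n n] A' by auto
  have "A11 = 1\<^sub>m 1"
    using split \<open>A' $$ (0, 0) = 1\<close> unfolding split_block_def Let_def by (intro eq_matI) auto
  define E1 where "E1 = four_block_mat (1\<^sub>m 1) (0\<^sub>m 1 n) (- A21) (1\<^sub>m n)"
  define E2 where "E2 = four_block_mat (1\<^sub>m 1) (- A12) (0\<^sub>m n 1) (1\<^sub>m n)"
  have E1: "E1 \<in> carrier_mat (Suc n) (Suc n)" "det E1 = 1"
    unfolding E1_def using A21 by (auto simp: det_four_block_mat_upper_right_zero[of _ 1 _ n])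
  have E2: "E2 \<in> carrier_mat (Suc n) (Suc n)" "det E2 = 1"
    unfolding E2_def using A12 by (auto simp: det_four_block_mat_lower_left_zero[of _ 1 _ n])
  show ?thesis
  proof (rule that[of "E1 * D * S1" "S2 * E2" "A22 - A21 * A12"])
    show "E1 * D * S1 \<in> carrier_mat (Suc n) (Suc n)" "S2 * E2 \<in> carrier_mat (Suc n) (Suc n)"
      "A22 - A21 * A12 \<in> carrier_mat n n"
      using E1 E2 D S1 S2 A12 A21 A22 by auto
    show "det (E1 * D * S1) \<noteq> 0" "det (S2 * E2) \<noteq> 0"
      using E1 E2 D S1 S2 by (auto simp: det_mult[of _ "Suc n"])
    have "E1 * D * S1 * A * (S2 * E2) = E1 * A' * E2"
      unfolding A'_def A1_def using E1 E2 D S1 S2 A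
      by (simp add: assoc_mult_mat[of _ "Suc n" "Suc n" _ "Suc n" _ "Suc n"])
    also have "\<dots> = one_block (A22 - A21 * A12)"
      unfolding E1_def E2_def A'_blocks \<open>A11 = 1\<^sub>m 1\<close> by (rule block_elimination[OF A12 A21 A22])
    finally show "E1 * D * S1 * A * (S2 * E2) = one_block (A22 - A21 * A12)" .
  qed
qed

definition rank_normal_mat :: "nat \<Rightarrow> nat \<Rightarrow> 'a::comm_ring_1 mat" where
  "rank_normal_mat n r = mat n n (\<lambda>(i, j). if i = j \<and> i < r then 1 else 0)"

lemma rank_normal_mat_carrier [simp]: "rank_normal_mat n r \<in> carrier_mat n n"
  by (simp add: rank_normal_mat_def)

lemma rank_normal_mat_Suc: "rank_normal_mat (Suc n) (Suc r) = one_block (rank_normal_mat n r)"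
  by (rule eq_matI) (auto simp: rank_normal_mat_def one_block_def)

lemma rank_normal_mat_mult_vec:
  assumes v: "v \<in> carrier_vec n"
  shows "rank_normal_mat n r *\<^sub>v v = vec n (\<lambda>i. if i < r then v $ i else 0)"
proof (rule eq_vecI)
  fix i assume "i < dim_vec (vec n (\<lambda>i. if i < r then v $ i else 0))"
  then have i: "i < n" by simp
  have "(rank_normal_mat n r *\<^sub>v v) $ i = (\<Sum>l = 0..<n. (if i = l \<and> i < r then 1 else 0) * v $ l)"
    using i v by (simp add: rank_normal_mat_def scalar_prod_def)
  also have "\<dots> = (\<Sum>l = 0..<n. if l = i then (if i < r then v $ l else 0) else 0)"
    by (rule sum.cong) auto
  finally show "(rank_normal_mat n r *\<^sub>v v) $ i = vec n (\<lambda>i. if i < r then v $ i else 0) $ i"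
    using i by simp
qed (simp add: rank_normal_mat_def)

lemma rank_normal_form:
  fixes A :: "'a::field mat"
  assumes "A \<in> carrier_mat n n"
  shows "\<exists>U V r. U \<in> carrier_mat n n \<and> V \<in> carrier_mat n n \<and> det U \<noteq> 0 \<and> det V \<noteq> 0 \<and> r \<le> n
     \<and> U * A * V = rank_normal_mat n r"
  using assms
proof (induction n arbitrary: A)
  case 0
  then show ?case
    by (intro exI[of _ "1\<^sub>m 0"] exI[of _ 0]) (auto simp: rank_normal_mat_def)
next
  case (Suc n)
  show ?case
  proof (cases "\<exists>i<Suc n. \<exists>j<Suc n. A $$ (i, j) \<noteq> 0")
    case False
    then have "A = rank_normal_mat (Suc n) 0"
      using Suc.prems by (intro eq_matI) (auto simp: rank_normal_mat_def)
    moreover have "1\<^sub>m (Suc n) * A * 1\<^sub>m (Suc n) = A"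
      using Suc.prems by simp
    ultimately show ?thesis
      by (metis det_one le0 one_carrier_mat one_neq_zero)
  next
    case True
    then obtain i j where "i < Suc n" "j < Suc n" "A $$ (i, j) \<noteq> 0" by blast
    then obtain L R B where L: "L \<in> carrier_mat (Suc n) (Suc n)" "det L \<noteq> 0"
      and R: "R \<in> carrier_mat (Suc n) (Suc n)" "det R \<noteq> 0"
      and B: "B \<in> carrier_mat n n" and LAR: "L * A * R = one_block B"
      using pivot_reduction[OF Suc.prems] by metis
    obtain U V r where U: "U \<in> carrier_mat n n" "det U \<noteq> 0" and V: "V \<in> carrier_mat n n" "det V \<noteq> 0"
      and r: "r \<le> n" and UBV: "U * B * V = rank_normal_mat n r"
      using Suc.IH[OF B] by blast
    have UL: "one_block U * L \<in> carrier_mat (Suc n) (Suc n)" "det (one_block U * L) \<noteq> 0"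
      using mult_carrier_mat[OF one_block_carrier[OF U(1)] L(1)] L U
      by (auto simp: det_mult[of _ "Suc n"] det_one_block)
    have RV: "R * one_block V \<in> carrier_mat (Suc n) (Suc n)" "det (R * one_block V) \<noteq> 0"
      using mult_carrier_mat[OF R(1) one_block_carrier[OF V(1)]] R V
      by (auto simp: det_mult[of _ "Suc n"] det_one_block)
    have "(one_block U * L) * A * (R * one_block V) = one_block U * (L * A * R) * one_block V"
      using L R U V Suc.prems by (simp add: assoc_mult_mat[of _ "Suc n" "Suc n" _ "Suc n" _ "Suc n"])
    also have "\<dots> = one_block (U * B) * one_block V"
      unfolding LAR using U B by (simp add: one_block_mult)
    also have "\<dots> = one_block (U * B * V)"
      using U V B by (simp add: one_block_mult[of "U * B" n])
    also have "\<dots> = rank_normal_mat (Suc n) (Suc r)"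
      unfolding rank_normal_mat_Suc UBV ..
    finally have "(one_block U * L) * A * (R * one_block V) = rank_normal_mat (Suc n) (Suc r)" .
    then show ?thesis
      using UL RV r by (metis Suc_le_mono)
  qed
qed

lemma orth_to_invariant_coordinate_subspace:
  fixes G :: "'a::field mat"
  assumes G: "G \<in> carrier_mat m m" "det G \<noteq> 0" and r: "r \<le> m" and z: "z \<in> carrier_vec m"
    and invariant: "\<And>k. k \<in> carrier_vec m \<Longrightarrow> \<forall>i<r. k $ i = 0 \<Longrightarrow> \<forall>i<r. (G *\<^sub>v k) $ i = 0"
    and orth: "\<And>k. k \<in> carrier_vec m \<Longrightarrow> \<forall>i<r. k $ i = 0 \<Longrightarrow> z \<bullet> (G *\<^sub>v k) = 0"
    and i: "r \<le> i" "i < m"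
  shows "z $ i = 0"
proof -
  obtain G11 G12 G21 G22 where split: "split_block G r r = (G11, G12, G21, G22)"
    by (metis prod_cases4)
  have m: "m = r + (m - r)" using r by simp
  have G11: "G11 \<in> carrier_mat r r" and G12: "G12 \<in> carrier_mat r (m - r)"
    and G21: "G21 \<in> carrier_mat (m - r) r" and G22: "G22 \<in> carrier_mat (m - r) (m - r)"
    and Gb: "G = four_block_mat G11 G12 G21 G22"
    using split_block[OF split, of "m - r" "m - r"] G r by auto
  have "G $$ (i, j) = 0" if ij: "i < r" "r \<le> j" "j < m" for i j
  proof -
    have "(G *\<^sub>v unit_vec m j) $ i = 0"
      using invariant[of "unit_vec m j"] ij by simp
    then show ?thesis
      using G ij by simp
  qed
  then have G12_zero: "G12 = 0\<^sub>m r (m - r)"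
    using split G r unfolding split_block_def Let_def by (intro eq_matI) auto
  have "det G = det G11 * det G22"
    unfolding Gb G12_zero by (rule det_four_block_mat_upper_right_zero[OF G11 _ G21 G22]) simp
  then have det22: "det (transpose_mat G22) \<noteq> 0"
    using G G22 by (simp add: det_transpose)
  define z2 where "z2 = vec_last z (m - r)"
  have z2: "z2 \<in> carrier_vec (m - r)"
    unfolding z2_def by simp
  have z_split: "z = vec_first z r @\<^sub>v z2"
    unfolding z2_def using z m by (metis vec_first_last_append)
  have "(transpose_mat G22 *\<^sub>v z2) $ l = 0" if l: "l < m - r" for l
  proof -
    define k :: "'a vec" where "k = 0\<^sub>v r @\<^sub>v unit_vec (m - r) l"
    have "k \<in> carrier_vec (r + (m - r))"
      unfolding k_def by (intro append_carrier_vec) auto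
    then have k: "k \<in> carrier_vec m" "\<forall>i<r. k $ i = 0"
      using m unfolding k_def by auto
    have "G *\<^sub>v k = (G11 *\<^sub>v 0\<^sub>v r + G12 *\<^sub>v unit_vec (m - r) l) @\<^sub>v (G21 *\<^sub>v 0\<^sub>v r + G22 *\<^sub>v unit_vec (m - r) l)"
      unfolding Gb k_def by (rule four_block_mat_mult_vec[OF G11 G12 G21 G22]) auto
    also have "\<dots> = 0\<^sub>v r @\<^sub>v (G22 *\<^sub>v unit_vec (m - r) l)"
      unfolding G12_zero using G11 G21 G22 by simp
    finally have "z \<bullet> (G *\<^sub>v k) = (vec_first z r @\<^sub>v z2) \<bullet> (0\<^sub>v r @\<^sub>v (G22 *\<^sub>v unit_vec (m - r) l))"
      using z_split by simp
    also have "\<dots> = vec_first z r \<bullet> 0\<^sub>v r + z2 \<bullet> (G22 *\<^sub>v unit_vec (m - r) l)"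
      by (rule scalar_prod_append[of _ r _ "m - r"]) (use G22 z2 in auto)
    also have "\<dots> = (transpose_mat G22 *\<^sub>v z2) \<bullet> unit_vec (m - r) l"
      using G22 z2 l by (simp add: transpose_vec_mult_scalar[symmetric, of G22])
    also have "\<dots> = (transpose_mat G22 *\<^sub>v z2) $ l"
      using G22 l by simp
    finally show ?thesis
      using orth[OF k] by simp
  qed
  then have "transpose_mat G22 *\<^sub>v z2 = 0\<^sub>v (m - r)"
    using G22 by (intro eq_vecI) auto
  then have "z2 = 0\<^sub>v (m - r)"
    using det_0_iff_vec_prod_zero_field[of "transpose_mat G22" "m - r"] det22 G22 z2 by auto
  moreover have "z $ i = z2 $ (i - r)"
    unfolding z2_def vec_last_def using i z r by simp
  ultimately show ?thesis
    using i by simp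
qed

lemma det_nonzero_left_inverse:
  fixes A :: "'a::field mat"
  assumes "A \<in> carrier_mat n n" "det A \<noteq> 0"
  obtains B where "B \<in> carrier_mat n n" "B * A = 1\<^sub>m n"
  using det_non_zero_imp_unit[OF assms, unfolded Units_def, of "()"] by (auto simp: ring_mat_def)

text \<open>If \<open>C\<close> maps \<open>ker A\<close> into \<open>ker A\<^sup>T\<close>, it does so onto (by counting dimensions, which the
  rank normal form makes explicit); so a vector \<open>y\<close> orthogonal to \<open>C (ker A)\<close> is orthogonal to \<open>ker A\<^sup>T\<close>,
  i.e.\ lies in the range of \<open>A\<close>.\<close>
lemma range_criterion:
  fixes A C :: "'a::field mat"
  assumes A: "A \<in> carrier_mat m m" and C: "C \<in> carrier_mat m m" "det C \<noteq> 0" and y: "y \<in> carrier_vec m"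
    and ker: "\<And>c. c \<in> carrier_vec m \<Longrightarrow> A *\<^sub>v c = 0\<^sub>v m \<Longrightarrow>
                transpose_mat A *\<^sub>v (C *\<^sub>v c) = 0\<^sub>v m \<and> y \<bullet> (C *\<^sub>v c) = 0"
  obtains c where "c \<in> carrier_vec m" "y = A *\<^sub>v c"
proof -
  obtain U V r where U: "U \<in> carrier_mat m m" "det U \<noteq> 0" and V: "V \<in> carrier_mat m m" "det V \<noteq> 0"
    and r: "r \<le> m" and UAV: "U * A * V = rank_normal_mat m r"
    using rank_normal_form[OF A] by blast
  obtain U' where U': "U' \<in> carrier_mat m m" "U' * U = 1\<^sub>m m"
    using det_nonzero_left_inverse[OF U] by blast
  define J :: "'a mat" where "J = rank_normal_mat m r"
  have J: "J \<in> carrier_mat m m" "transpose_mat J = J"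
    unfolding J_def by (auto simp: rank_normal_mat_def)
  have AV: "A * V = U' * J"
  proof -
    have "A * V = (U' * U) * A * V"
      using U'(2) A V by simp
    also have "\<dots> = U' * (U * A * V)"
      using U(1) U'(1) A V by (simp add: assoc_mult_mat[of _ m m _ m _ m])
    finally show ?thesis
      unfolding J_def UAV .
  qed
  have VA: "transpose_mat V * transpose_mat A = J * transpose_mat U'"
    using arg_cong[OF AV, of transpose_mat] A V U' J by (simp add: transpose_mult)
  define G where "G = transpose_mat U' * C * V"
  define z where "z = U *\<^sub>v y"
  have G: "G \<in> carrier_mat m m" "det G \<noteq> 0"
    unfolding G_def using U U' V C det_mult[OF U'(1) U(1)]
    by (auto simp: det_mult[of _ m] det_transpose)
  have z: "z \<in> carrier_vec m"
    unfolding z_def using U y by simp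
  have Uz: "U' *\<^sub>v z = y"
  proof -
    have "U' *\<^sub>v z = (U' * U) *\<^sub>v y"
      unfolding z_def by (rule assoc_mult_mat_vec[symmetric]) (use U(1) U'(1) y in auto)
    then show ?thesis
      using U'(2) y by simp
  qed
  have Gk: "G *\<^sub>v k = transpose_mat U' *\<^sub>v (C *\<^sub>v (V *\<^sub>v k))" if k: "k \<in> carrier_vec m" for k
  proof -
    have "G *\<^sub>v k = (transpose_mat U' * C) *\<^sub>v (V *\<^sub>v k)"
      unfolding G_def by (rule assoc_mult_mat_vec) (use U'(1) C(1) V(1) k in auto)
    also have "\<dots> = transpose_mat U' *\<^sub>v (C *\<^sub>v (V *\<^sub>v k))"
      by (rule assoc_mult_mat_vec) (use U'(1) C(1) V(1) k in auto)
    finally show ?thesis .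
  qed
  have k_props: "(\<forall>i<r. (G *\<^sub>v k) $ i = 0) \<and> z \<bullet> (G *\<^sub>v k) = 0"
    if k: "k \<in> carrier_vec m" "\<forall>i<r. k $ i = 0" for k
  proof -
    have Jk: "J *\<^sub>v k = 0\<^sub>v m"
      unfolding J_def rank_normal_mat_mult_vec[OF k(1)] using k by (intro eq_vecI) auto
    have "A *\<^sub>v (V *\<^sub>v k) = (A * V) *\<^sub>v k"
      using A V k by simp
    also have "\<dots> = 0\<^sub>v m"
      unfolding AV using U'(1) J(1) k Jk by simp
    finally have AT: "transpose_mat A *\<^sub>v (C *\<^sub>v (V *\<^sub>v k)) = 0\<^sub>v m"
      and yC: "y \<bullet> (C *\<^sub>v (V *\<^sub>v k)) = 0"
      using ker[of "V *\<^sub>v k"] V k by auto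
    have "J *\<^sub>v (G *\<^sub>v k) = (J * transpose_mat U') *\<^sub>v (C *\<^sub>v (V *\<^sub>v k))"
      unfolding Gk[OF k(1)] using J(1) U'(1) C(1) V(1) k by simp
    also have "\<dots> = transpose_mat V *\<^sub>v (transpose_mat A *\<^sub>v (C *\<^sub>v (V *\<^sub>v k)))"
      unfolding VA[symmetric] using A V(1) C(1) k by simp
    also have "\<dots> = 0\<^sub>v m"
      unfolding AT using V(1) by simp
    finally have JGk: "vec m (\<lambda>i. if i < r then (G *\<^sub>v k) $ i else 0) = 0\<^sub>v m"
      unfolding J_def rank_normal_mat_mult_vec[OF mult_mat_vec_carrier[OF G(1) k(1)]] .
    have "(G *\<^sub>v k) $ i = 0" if i: "i < r" for i
      using arg_cong[OF JGk, of "\<lambda>v. v $ i"] i r by simp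
    moreover have "z \<bullet> (G *\<^sub>v k) = (U' *\<^sub>v z) \<bullet> (C *\<^sub>v (V *\<^sub>v k))"
      unfolding Gk[OF k(1)]
      using transpose_vec_mult_scalar[of "transpose_mat U'" m m "C *\<^sub>v (V *\<^sub>v k)" z] U'(1) C(1) V(1) k z
      by simp
    ultimately show ?thesis
      using yC Uz by simp
  qed
  have "J *\<^sub>v z = z"
  proof (rule eq_vecI)
    fix i assume "i < dim_vec z"
    then have i: "i < m" using z by simp
    show "(J *\<^sub>v z) $ i = z $ i"
    proof (cases "i < r")
      case False
      then have "z $ i = 0"
        using orth_to_invariant_coordinate_subspace[OF G r z] k_props i by simp
      then show ?thesis
        unfolding J_def rank_normal_mat_mult_vec[OF z] using i False by simp
    qed (unfold J_def rank_normal_mat_mult_vec[OF z], use i in simp)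
  qed (use J(1) z in simp)
  then have "y = (A * V) *\<^sub>v z"
    unfolding AV Uz[symmetric] using U'(1) J(1) z by simp
  then show ?thesis
    using that[of "V *\<^sub>v z"] A V(1) z by simp
qed


section \<open>Stably isomorphic forms represent a common value\<close>

lemma congruent_scalar_prod:
  fixes P F :: "'a::comm_ring_1 mat"
  assumes P: "P \<in> carrier_mat k k" and F: "F \<in> carrier_mat k k"
    and v: "v \<in> carrier_vec k" and w: "w \<in> carrier_vec k"
  shows "w \<bullet> ((transpose_mat P * F * P) *\<^sub>v v) = (P *\<^sub>v w) \<bullet> (F *\<^sub>v (P *\<^sub>v v))"
proof -
  have "w \<bullet> ((transpose_mat P * F * P) *\<^sub>v v) = (transpose_mat P *\<^sub>v (F *\<^sub>v (P *\<^sub>v v))) \<bullet> w"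
    using P F v w by (simp add: assoc_mult_mat_vec[of _ k k _ k] comm_scalar_prod[of w k])
  also have "\<dots> = (F *\<^sub>v (P *\<^sub>v v)) \<bullet> (P *\<^sub>v w)"
    using P F v w by (intro transpose_vec_mult_scalar) auto
  also have "\<dots> = (P *\<^sub>v w) \<bullet> (F *\<^sub>v (P *\<^sub>v v))"
    using P F v w by (intro comm_scalar_prod[of _ k]) auto
  finally show ?thesis .
qed

lemma diag_block_scalar_prod:
  fixes M C :: "'a::comm_ring_1 mat"
  assumes M: "M \<in> carrier_mat n n" and C: "C \<in> carrier_mat m m"
    and vecs: "x \<in> carrier_vec n" "x' \<in> carrier_vec n" "c \<in> carrier_vec m" "c' \<in> carrier_vec m"
  shows "(x' @\<^sub>v c') \<bullet> (four_block_mat M (0\<^sub>m n m) (0\<^sub>m m n) C *\<^sub>v (x @\<^sub>v c))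
       = x' \<bullet> (M *\<^sub>v x) + c' \<bullet> (C *\<^sub>v c)"
proof -
  have "four_block_mat M (0\<^sub>m n m) (0\<^sub>m m n) C *\<^sub>v (x @\<^sub>v c) = (M *\<^sub>v x) @\<^sub>v (C *\<^sub>v c)"
    using four_block_mat_mult_vec[OF M _ _ C, of "0\<^sub>m n m" "0\<^sub>m m n" x c] M C vecs by simp
  then show ?thesis
    using M C vecs by (simp add: scalar_prod_append[of _ n _ m])
qed

lemma congruent_diag_blocks_scalar_prod:
  fixes M N C P :: "'a::comm_ring_1 mat"
  assumes M: "M \<in> carrier_mat n n" and N: "N \<in> carrier_mat n n" and C: "C \<in> carrier_mat m m"
    and P: "P \<in> carrier_mat (n + m) (n + m)"
    and PFP: "transpose_mat P * four_block_mat M (0\<^sub>m n m) (0\<^sub>m m n) C * P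
              = four_block_mat N (0\<^sub>m n m) (0\<^sub>m m n) C"
    and split: "split_block P n n = (P11, P12, P21, P22)"
    and vecs: "y \<in> carrier_vec n" "y' \<in> carrier_vec n" "c \<in> carrier_vec m" "c' \<in> carrier_vec m"
  shows "y' \<bullet> (N *\<^sub>v y) + c' \<bullet> (C *\<^sub>v c)
      = (P11 *\<^sub>v y' + P12 *\<^sub>v c') \<bullet> (M *\<^sub>v (P11 *\<^sub>v y + P12 *\<^sub>v c))
        + (P21 *\<^sub>v y' + P22 *\<^sub>v c') \<bullet> (C *\<^sub>v (P21 *\<^sub>v y + P22 *\<^sub>v c))"
proof -
  have P11: "P11 \<in> carrier_mat n n" and P12: "P12 \<in> carrier_mat n m"
    and P21: "P21 \<in> carrier_mat m n" and P22: "P22 \<in> carrier_mat m m"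
    and Pb: "P = four_block_mat P11 P12 P21 P22"
    using split_block[OF split, of m m] P by auto
  have Pv: "P *\<^sub>v (u @\<^sub>v w) = (P11 *\<^sub>v u + P12 *\<^sub>v w) @\<^sub>v (P21 *\<^sub>v u + P22 *\<^sub>v w)"
    if "u \<in> carrier_vec n" "w \<in> carrier_vec m" for u w
    unfolding Pb by (rule four_block_mat_mult_vec[OF P11 P12 P21 P22 that])
  have "y' \<bullet> (N *\<^sub>v y) + c' \<bullet> (C *\<^sub>v c)
      = (y' @\<^sub>v c') \<bullet> ((transpose_mat P * four_block_mat M (0\<^sub>m n m) (0\<^sub>m m n) C * P) *\<^sub>v (y @\<^sub>v c))"
    unfolding PFP using diag_block_scalar_prod[OF N C] vecs by simp
  also have "\<dots> = (P *\<^sub>v (y' @\<^sub>v c')) \<bullet> (four_block_mat M (0\<^sub>m n m) (0\<^sub>m m n) C *\<^sub>v (P *\<^sub>v (y @\<^sub>v c)))"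
    using M C P vecs by (intro congruent_scalar_prod) auto
  also have "\<dots> = (P11 *\<^sub>v y' + P12 *\<^sub>v c') \<bullet> (M *\<^sub>v (P11 *\<^sub>v y + P12 *\<^sub>v c))
      + (P21 *\<^sub>v y' + P22 *\<^sub>v c') \<bullet> (C *\<^sub>v (P21 *\<^sub>v y + P22 *\<^sub>v c))"
    unfolding Pv[OF vecs(1,3)] Pv[OF vecs(2,4)] using P11 P12 P21 P22 vecs
    by (intro diag_block_scalar_prod[OF M C]) auto
  finally show ?thesis .
qed

text \<open>By contradiction: if all such vectors lay in \<open>0 \<oplus> C\<close>, they would be fixed by \<open>P\<close>. The isometry
  then makes the range of \<open>P\<^sub>2\<^sub>2 - 1\<close> \<open>C\<close>-orthogonal to its kernel, so by \<open>range_criterion\<close> the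
  vector \<open>P\<^sub>2\<^sub>1 e\<close> lies in that range, which produces such a vector with \<open>y = e \<noteq> 0\<close>.\<close>
lemma block_isometry_fixed_vector:
  fixes M N C P11 P12 P21 P22 :: "'a::field mat"
  assumes M: "M \<in> carrier_mat n n" and N: "N \<in> carrier_mat n n" and n: "0 < n"
    and C: "C \<in> carrier_mat m m" "det C \<noteq> 0"
    and P11: "P11 \<in> carrier_mat n n" and P12: "P12 \<in> carrier_mat n m"
    and P21: "P21 \<in> carrier_mat m n" and P22: "P22 \<in> carrier_mat m m"
    and form: "\<And>y y' c c'. y \<in> carrier_vec n \<Longrightarrow> y' \<in> carrier_vec n \<Longrightarrow> c \<in> carrier_vec m \<Longrightarrow>
      c' \<in> carrier_vec m \<Longrightarrow> y' \<bullet> (N *\<^sub>v y) + c' \<bullet> (C *\<^sub>v c)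
      = (P11 *\<^sub>v y' + P12 *\<^sub>v c') \<bullet> (M *\<^sub>v (P11 *\<^sub>v y + P12 *\<^sub>v c))
        + (P21 *\<^sub>v y' + P22 *\<^sub>v c') \<bullet> (C *\<^sub>v (P21 *\<^sub>v y + P22 *\<^sub>v c))"
  obtains y c where "y \<in> carrier_vec n" "c \<in> carrier_vec m" "P21 *\<^sub>v y + P22 *\<^sub>v c = c"
    "y \<noteq> 0\<^sub>v n \<or> P11 *\<^sub>v y + P12 *\<^sub>v c \<noteq> 0\<^sub>v n"
proof (rule ccontr)
  note witness = that
  assume "\<not> thesis"
  then have fixed: "y = 0\<^sub>v n \<and> P11 *\<^sub>v y + P12 *\<^sub>v c = 0\<^sub>v n"
    if "y \<in> carrier_vec n" "c \<in> carrier_vec m" "P21 *\<^sub>v y + P22 *\<^sub>v c = c" for y c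
    using witness that by blast
  define A where "A = P22 - 1\<^sub>m m"
  have A: "A \<in> carrier_mat m m" and Ac: "\<And>c. c \<in> carrier_vec m \<Longrightarrow> A *\<^sub>v c = P22 *\<^sub>v c - c"
    unfolding A_def using P22 by (auto simp: minus_mult_distrib_mat_vec)
  define e :: "'a vec" where "e = unit_vec n 0"
  have e: "e \<in> carrier_vec n" "e \<noteq> 0\<^sub>v n"
    unfolding e_def using n by (auto simp: unit_vec_def vec_eq_iff)
  have ker: "transpose_mat A *\<^sub>v (C *\<^sub>v c) = 0\<^sub>v m \<and> (P21 *\<^sub>v e) \<bullet> (C *\<^sub>v c) = 0"
    if c: "c \<in> carrier_vec m" and "A *\<^sub>v c = 0\<^sub>v m" for c
  proof -
    have P22c: "P22 *\<^sub>v c = c"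
    proof (rule eq_vecI)
      fix i assume i: "i < dim_vec c"
      have "(A *\<^sub>v c) $ i = 0"
        using \<open>A *\<^sub>v c = 0\<^sub>v m\<close> i c by simp
      then show "(P22 *\<^sub>v c) $ i = c $ i"
        using Ac[OF c] i c P22 by simp
    qed (use P22 c in simp)
    then have P12c: "P12 *\<^sub>v c = 0\<^sub>v n"
      using fixed[of "0\<^sub>v n" c] c P11 P12 P21 by simp
    have orth: "(P21 *\<^sub>v y' + A *\<^sub>v c') \<bullet> (C *\<^sub>v c) = 0"
      if y': "y' \<in> carrier_vec n" and c': "c' \<in> carrier_vec m" for y' c'
    proof -
      have "c' \<bullet> (C *\<^sub>v c) = (P21 *\<^sub>v y' + P22 *\<^sub>v c') \<bullet> (C *\<^sub>v c)"
        using form[OF zero_carrier_vec y' c c'] P11 P12 P21 P22 M N y' c c' P22c P12c by simp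
      then show ?thesis
        using y' c' c P21 P22 C(1) Ac[OF c']
        by (simp add: add_scalar_prod_distrib[of _ m] minus_scalar_prod_distrib[of _ m])
    qed
    have "(transpose_mat A *\<^sub>v (C *\<^sub>v c)) $ i = 0" if i: "i < m" for i
    proof -
      have "(transpose_mat A *\<^sub>v (C *\<^sub>v c)) $ i = (transpose_mat A *\<^sub>v (C *\<^sub>v c)) \<bullet> unit_vec m i"
        using A i by simp
      also have "\<dots> = (C *\<^sub>v c) \<bullet> (A *\<^sub>v unit_vec m i)"
        using A C(1) c i by (intro transpose_vec_mult_scalar) auto
      also have "\<dots> = (A *\<^sub>v unit_vec m i) \<bullet> (C *\<^sub>v c)"
        using A C(1) c i by (intro comm_scalar_prod[of _ m]) auto
      also have "\<dots> = 0"
        using orth[of "0\<^sub>v n" "unit_vec m i"] A P21 i by simp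
      finally show ?thesis .
    qed
    then show ?thesis
      using orth[OF e(1) zero_carrier_vec] A C(1) P21 e by (intro conjI eq_vecI) auto
  qed
  obtain c0 where c0: "c0 \<in> carrier_vec m" "P21 *\<^sub>v e = A *\<^sub>v c0"
    using range_criterion[OF A C, of "P21 *\<^sub>v e"] ker P21 e by auto
  have "P21 *\<^sub>v e + P22 *\<^sub>v (- c0) = - c0"
  proof (rule eq_vecI)
    fix i assume "i < dim_vec (- c0)"
    then have i: "i < m" using c0 by simp
    have "(P21 *\<^sub>v e) $ i = (P22 *\<^sub>v c0) $ i - c0 $ i"
      unfolding c0(2) Ac[OF c0(1)] using i c0 P22 by simp
    moreover have "(P22 *\<^sub>v (- c0)) $ i = - (P22 *\<^sub>v c0) $ i"
      using i c0 P22 by simp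
    ultimately show "(P21 *\<^sub>v e + P22 *\<^sub>v (- c0)) $ i = (- c0) $ i"
      using i c0 P21 P22 e by simp
  qed (use P21 P22 c0 in simp)
  then show False
    using fixed[of e "- c0"] e c0 by simp
qed

lemma stably_iso_common_value:
  fixes M N :: "'a::field mat"
  assumes M: "M \<in> carrier_mat n n" and N: "N \<in> carrier_mat n n" and n: "0 < n"
    and stable: "stably_iso n M N"
  obtains x y where "x \<in> carrier_vec n" "y \<in> carrier_vec n" "x \<noteq> 0\<^sub>v n \<or> y \<noteq> 0\<^sub>v n"
    "x \<bullet> (M *\<^sub>v x) = y \<bullet> (N *\<^sub>v y)"
proof -
  obtain m C where nondeg: "nondeg_sym m C"
    and congruent: "congruent_mat (n + m) (four_block_mat M (0\<^sub>m n m) (0\<^sub>m m n) C)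
                                     (four_block_mat N (0\<^sub>m n m) (0\<^sub>m m n) C)"
    using stable unfolding stably_iso_def by blast
  have C: "C \<in> carrier_mat m m" "det C \<noteq> 0"
    using nondeg unfolding nondeg_sym_def by auto
  obtain P where P: "P \<in> carrier_mat (n + m) (n + m)"
    and PFP: "transpose_mat P * four_block_mat M (0\<^sub>m n m) (0\<^sub>m m n) C * P
              = four_block_mat N (0\<^sub>m n m) (0\<^sub>m m n) C"
    using congruent unfolding congruent_mat_def by blast
  obtain P11 P12 P21 P22 where split: "split_block P n n = (P11, P12, P21, P22)"
    by (metis prod_cases4)
  have P11: "P11 \<in> carrier_mat n n" and P12: "P12 \<in> carrier_mat n m"
    and P21: "P21 \<in> carrier_mat m n" and P22: "P22 \<in> carrier_mat m m"
    using split_block[OF split, of m m] P by auto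
  note form = congruent_diag_blocks_scalar_prod[OF M N C(1) P PFP split]
  obtain y c where y: "y \<in> carrier_vec n" and c: "c \<in> carrier_vec m"
    and fixed: "P21 *\<^sub>v y + P22 *\<^sub>v c = c" and nonzero: "y \<noteq> 0\<^sub>v n \<or> P11 *\<^sub>v y + P12 *\<^sub>v c \<noteq> 0\<^sub>v n"
    using block_isometry_fixed_vector[OF M N n C P11 P12 P21 P22 form] by blast
  have "(P11 *\<^sub>v y + P12 *\<^sub>v c) \<bullet> (M *\<^sub>v (P11 *\<^sub>v y + P12 *\<^sub>v c)) = y \<bullet> (N *\<^sub>v y)"
    using form[OF y y c c] unfolding fixed by simp
  moreover have "P11 *\<^sub>v y + P12 *\<^sub>v c \<in> carrier_vec n"
    using y c P11 P12 by simp
  ultimately show ?thesis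
    using that y nonzero by blast
qed

lemma F2_htpy_equiv_bez_pair:
  fixes f :: "'a::field poly \<times> 'a poly"
  assumes "f \<in> F2 TYPE('a)"
  obtains p r q where "bez2 (fst f) (snd f) = sym_mat2 p r q" "p*q - r^2 \<noteq> 0"
    "naive_htpy_equiv f (bez_pair p r q)"
proof -
  obtain A B where f: "f = (A, B)" by fastforce
  obtain a0 a1 b0 b1 where A: "A = [:a0, a1, 1:]" and B: "B = [:b0, b1:]" and res: "res22 A B \<noteq> 0"
    using F2_field_cases assms unfolding f by metis
  show ?thesis
  proof (rule that)
    show "bez2 (fst f) (snd f) = sym_mat2 (a1*b0 - a0*b1) b0 b1"
      unfolding f A B by (simp add: bez2_pCons)
    show "(a1*b0 - a0*b1) * b1 - b0^2 \<noteq> 0"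
      using res unfolding A B res22_pCons by (auto simp: algebra_simps)
    show "naive_htpy_equiv f (bez_pair (a1*b0 - a0*b1) b0 b1)"
      unfolding f A B by (rule htpy_equiv_bez_pair) (use res A B in simp)
  qed
qed

lemma carrier_vec_2_neq_zero:
  assumes "x \<in> carrier_vec 2" "x \<noteq> 0\<^sub>v 2"
  shows "x $ 0 \<noteq> 0 \<or> x $ 1 \<noteq> 0"
  using assms by (auto simp: vec_eq_iff less_2_cases_iff)

theorem corollary3p20:
  fixes f g :: "'a::field poly \<times> 'a poly"
  assumes "f \<in> F2 TYPE('a)" and "g \<in> F2 TYPE('a)"
    and "stably_iso 2 (bez2 (fst f) (snd f)) (bez2 (fst g) (snd g))"
    and "det (bez2 (fst f) (snd f)) = det (bez2 (fst g) (snd g))"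
  shows "naive_htpy_equiv f g"
proof -
  obtain p r q where bez_f: "bez2 (fst f) (snd f) = sym_mat2 p r q" and d: "p*q - r^2 \<noteq> 0"
    and f: "naive_htpy_equiv f (bez_pair p r q)"
    using F2_htpy_equiv_bez_pair[OF assms(1)] .
  obtain p' r' q' where bez_g: "bez2 (fst g) (snd g) = sym_mat2 p' r' q'"
    and g: "naive_htpy_equiv g (bez_pair p' r' q')"
    using F2_htpy_equiv_bez_pair[OF assms(2)] .
  have det: "p'*q' - r'^2 = p*q - r^2"
    using assms(4) unfolding bez_f bez_g det_sym_mat2 ..
  obtain x y where xy: "x \<in> carrier_vec 2" "y \<in> carrier_vec 2" "x \<noteq> 0\<^sub>v 2 \<or> y \<noteq> 0\<^sub>v 2"
    and common: "x \<bullet> (sym_mat2 p r q *\<^sub>v x) = y \<bullet> (sym_mat2 p' r' q' *\<^sub>v y)"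
    using stably_iso_common_value[OF sym_mat2_carrier sym_mat2_carrier _ assms(3)[unfolded bez_f bez_g]]
    by auto
  have "naive_htpy_equiv (bez_pair p r q) (bez_pair p' r' q')"
  proof (rule bez_pair_htpy_equiv_common_value[OF det d])
    show "x $ 0 \<noteq> 0 \<or> x $ 1 \<noteq> 0 \<or> y $ 0 \<noteq> 0 \<or> y $ 1 \<noteq> 0"
      using xy carrier_vec_2_neq_zero by blast
    show "binary_qf p r q (x $ 0) (x $ 1) = binary_qf p' r' q' (y $ 0) (y $ 1)"
      using common xy by (simp add: sym_mat2_quadratic_form)
  qed
  then show ?thesis
    using f g naive_htpy_equiv_sym naive_htpy_equiv_trans by meson
qed

end
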